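(* Let $\mathsf{K}$ be any class of totally ordered residuated lattices that contains the algebras $\mathbf{A}$, $\mathbf{B}$, $\mathbf{C}$ described in the context. Then $\mathsf{K}$ does not have the one-sided amalgamation property.
   Context: A residuated lattice is an algebra $(L,\wedge,\vee,\cdot,\backslash,/,1)$ where $(L,\wedge,\vee)$ is a lattice, $(L,\cdot,1)$ is a monoid, and $xy\le z \iff y\le x\backslash z \iff x\le z/y$. It is integral if $1$ is the top element; commutative if $\cdot$ is commutative, in which case $x\backslash y=y/x$ is written $x\to y$. In a chain, $x\to y=\max\{z: xz\le y\}$, and in an integral chain $x\to y=1$ whenever $x\le y$. The algebras (all commutative, integral, totally ordered, with $1$ the multiplicative identity and top): - $\mathbf{A}$: universe $u<v<1$, $xy=\min(x,y)$, and $x\to y=1$ if $x\le y$, $x\to y=y$ otherwise. - $\mathbf{B}$: universe $u<b<v<1$, with $v\cdot v=v$, $v\cdot b=b$, $v\cdot u=u$, $b\cdot b=u$, $b\cdot u=u$, $u\cdot u=u$; residuals: $x\to y=1$ if $x\le y$, and $v\to b=b$, $v\to u=u$, $b\to u=b$. - $\mathbf{C}$: universe $u<d<c<v<1$, with $v\cdot v=v$, $v\cdot c=d$, $v\cdot d=d$, $v\cdot u=u$, $c\cdot c=c\cdot d=d\cdot d=u$, and $x\cdot u=u$ for all $x$; residuals: $x\to y=1$ if $x\le y$, and $v\to c=c$, $v\to d=c$, $v\to u=u$, $c\to d=v$, $c\to u=c$, $d\to u=c$. $\mathbf{A}$ is a subalgebra of both $\mathbf{B}$ and $\mathbf{C}$.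 A V-formation in a class $\mathsf{K}$ is a tuple $(\mathbf{P},\mathbf{Q},\mathbf{R},i,j)$ with $\mathbf{P},\mathbf{Q},\mathbf{R}\in\mathsf{K}$ and $i\colon\mathbf{P}\to\mathbf{Q}$, $j\colon\mathbf{P}\to\mathbf{R}$ embeddings. A one-amalgam of it in $\mathsf{K}$ is $(\mathbf{D},h,k)$ with $\mathbf{D}\in\mathsf{K}$, $h\colon\mathbf{Q}\to\mathbf{D}$ a homomorphism, $k\colon\mathbf{R}\to\mathbf{D}$ an embedding, and $h\circ i=k\circ j$. $\mathsf{K}$ has the one-sided amalgamation property (1AP) if every V-formation in $\mathsf{K}$ has a one-amalgam in $\mathsf{K}$. *)

theory Defs
  imports Main
begin

record 'a rl =
  carrier :: "'a set"
  meet :: "'a \<Rightarrow> 'a \<Rightarrow> 'a"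
  join :: "'a \<Rightarrow> 'a \<Rightarrow> 'a"
  mult :: "'a \<Rightarrow> 'a \<Rightarrow> 'a"
  ldiv :: "'a \<Rightarrow> 'a \<Rightarrow> 'a"
  rdiv :: "'a \<Rightarrow> 'a \<Rightarrow> 'a"
  one :: 'a

definition rle :: "('a, 'b) rl_scheme \<Rightarrow> 'a \<Rightarrow> 'a \<Rightarrow> bool" where
  "rle L x y \<longleftrightarrow> meet L x y = x"

definition residuated_lattice :: "('a, 'b) rl_scheme \<Rightarrow> bool" where
  "residuated_lattice L \<longleftrightarrow>
     carrier L \<noteq> {} \<and> one L \<in> carrier L \<and>
     (\<forall>x\<in>carrier L. \<forall>y\<in>carrier L.
        meet L x y \<in> carrier L \<and> join L x y \<in> carrier L \<and> mult L x y \<in> carrier L \<and>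
        ldiv L x y \<in> carrier L \<and> rdiv L x y \<in> carrier L) \<and>
     \<comment> \<open>lattice axioms\<close>
     (\<forall>x\<in>carrier L. \<forall>y\<in>carrier L. \<forall>z\<in>carrier L.
        meet L x (meet L y z) = meet L (meet L x y) z \<and>
        join L x (join L y z) = join L (join L x y) z) \<and>
     (\<forall>x\<in>carrier L. \<forall>y\<in>carrier L.
        meet L x y = meet L y x \<and> join L x y = join L y x \<and>
        meet L x (join L x y) = x \<and> join L x (meet L x y) = x) \<and>
     \<comment> \<open>monoid axioms\<close>
     (\<forall>x\<in>carrier L. \<forall>y\<in>carrier L. \<forall>z\<in>carrier L.
        mult L x (mult L y z) = mult L (mult L x y) z) \<and>
     (\<forall>x\<in>carrier L. mult L (one L) x = x \<and> mult L x (one L) = x) \<and>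
     \<comment> \<open>residuation\<close>
     (\<forall>x\<in>carrier L. \<forall>y\<in>carrier L. \<forall>z\<in>carrier L.
        (rle L (mult L x y) z \<longleftrightarrow> rle L y (ldiv L x z)) \<and>
        (rle L (mult L x y) z \<longleftrightarrow> rle L x (rdiv L z y)))"

definition totally_ordered_rl :: "('a, 'b) rl_scheme \<Rightarrow> bool" where
  "totally_ordered_rl L \<longleftrightarrow> residuated_lattice L \<and>
     (\<forall>x\<in>carrier L. \<forall>y\<in>carrier L. rle L x y \<or> rle L y x)"

definition rl_hom :: "'a rl \<Rightarrow> 'b rl \<Rightarrow> ('a \<Rightarrow> 'b) \<Rightarrow> bool" where
  "rl_hom L M f \<longleftrightarrow>
     (\<forall>x\<in>carrier L. f x \<in> carrier M) \<and> f (one L) = one M \<and>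
     (\<forall>x\<in>carrier L. \<forall>y\<in>carrier L.
        f (meet L x y) = meet M (f x) (f y) \<and> f (join L x y) = join M (f x) (f y) \<and>
        f (mult L x y) = mult M (f x) (f y) \<and> f (ldiv L x y) = ldiv M (f x) (f y) \<and>
        f (rdiv L x y) = rdiv M (f x) (f y))"

definition rl_emb :: "'a rl \<Rightarrow> 'b rl \<Rightarrow> ('a \<Rightarrow> 'b) \<Rightarrow> bool" where
  "rl_emb L M f \<longleftrightarrow> rl_hom L M f \<and> inj_on f (carrier L)"

definition rl_iso :: "'a rl \<Rightarrow> 'b rl \<Rightarrow> ('a \<Rightarrow> 'b) \<Rightarrow> bool" where
  "rl_iso L M f \<longleftrightarrow> rl_hom L M f \<and> bij_betw f (carrier L) (carrier M)"

text \<open>A class K is represented as a set of algebras on a common carrier type;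
  "K contains the algebra X" means K contains an isomorphic copy of X.\<close>

definition one_amalgam ::
  "'a rl set \<Rightarrow> 'a rl \<Rightarrow> 'a rl \<Rightarrow> 'a rl \<Rightarrow> ('a \<Rightarrow> 'a) \<Rightarrow> ('a \<Rightarrow> 'a)
    \<Rightarrow> 'a rl \<Rightarrow> ('a \<Rightarrow> 'a) \<Rightarrow> ('a \<Rightarrow> 'a) \<Rightarrow> bool" where
  "one_amalgam K P Q R i j D h k \<longleftrightarrow>
     D \<in> K \<and> rl_hom Q D h \<and> rl_emb R D k \<and> (\<forall>x\<in>carrier P. h (i x) = k (j x))"

definition has_1AP :: "'a rl set \<Rightarrow> bool" where
  "has_1AP K \<longleftrightarrow>
     (\<forall>P Q R i j. P \<in> K \<and> Q \<in> K \<and> R \<in> K \<and> rl_emb P Q i \<and> rl_emb P R j \<longrightarrow>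
        (\<exists>D h k. one_amalgam K P Q R i j D h k))"

text \<open>The concrete algebras, encoded on natural numbers.
  A: u=0, v=1, 1=2.  B: u=0, b=1, v=2, 1=3.  C: u=0, d=1, c=2, v=3, 1=4.\<close>

definition alg_A :: "nat rl" where
  "alg_A = \<lparr> carrier = {0,1,2}, meet = min, join = max, mult = min,
     ldiv = (\<lambda>x y. if x \<le> y then 2 else y), rdiv = (\<lambda>y x. if x \<le> y then 2 else y),
     one = 2 \<rparr>"

definition B_mult :: "nat \<Rightarrow> nat \<Rightarrow> nat" where
  "B_mult x y = (if x = 3 then y else if y = 3 then x
     else if x = 0 \<or> y = 0 then 0 else if x = 1 \<and> y = 1 then 0 else min x y)"

definition B_imp :: "nat \<Rightarrow> nat \<Rightarrow> nat" where
  "B_imp x y = (if x \<le> y then 3 else if x = 1 \<and> y = 0 then 1 else y)"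

definition alg_B :: "nat rl" where
  "alg_B = \<lparr> carrier = {0,1,2,3}, meet = min, join = max, mult = B_mult,
     ldiv = B_imp, rdiv = (\<lambda>y x. B_imp x y), one = 3 \<rparr>"

definition C_mult :: "nat \<Rightarrow> nat \<Rightarrow> nat" where
  "C_mult x y = (if x = 4 then y else if y = 4 then x
     else if x = 0 \<or> y = 0 then 0
     else if x = 3 \<and> y = 3 then 3
     else if x = 3 \<or> y = 3 then 1
     else 0)"

definition C_imp :: "nat \<Rightarrow> nat \<Rightarrow> nat" where
  "C_imp x y = (if x \<le> y then 4 else if x = 4 then y
     else if x = 3 then (if y = 0 then 0 else 2)
     else if x = 2 then (if y = 1 then 3 else 2)
     else 2)"

definition alg_C :: "nat rl" where
  "alg_C = \<lparr> carrier = {0,1,2,3,4}, meet = min, join = max, mult = C_mult,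
     ldiv = C_imp, rdiv = (\<lambda>y x. C_imp x y), one = 4 \<rparr>"

end

theory Submission
  imports Defs
begin

text \<open>Embed \<open>\<^bold>A\<close> into \<open>\<^bold>B\<close> and \<open>\<^bold>C\<close> and suppose \<open>h : \<^bold>B \<rightarrow> \<^bold>D\<close>, \<open>k : \<^bold>C \<hookrightarrow> \<^bold>D\<close> agree on \<open>\<^bold>A\<close>,
  with \<open>\<^bold>D\<close> a chain. Put \<open>x = h b\<close>, \<open>y = k c\<close>, \<open>U = h u = k u\<close>. Both \<open>x\<close> and \<open>y\<close> square to \<open>U\<close>,
  \<open>x \<rightarrow> U = x\<close> and \<open>k d \<rightarrow> U = y\<close> with \<open>k d \<le> y\<close>. If \<open>x \<le> y\<close> then \<open>x y \<le> y y = U\<close>, so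
  \<open>y \<le> x \<rightarrow> U = x\<close>; if \<open>y \<le> x\<close> then \<open>(k d) x \<le> x x = U\<close>, so \<open>x \<le> k d \<rightarrow> U = y\<close>.
  Either way \<open>x = y\<close>. But \<open>v\<close> fixes \<open>b\<close> in \<open>\<^bold>B\<close> and moves \<open>c\<close> to \<open>d\<close> in \<open>\<^bold>C\<close>, so
  \<open>y = x = h v \<cdot> x = k v \<cdot> y = k d\<close>, contradicting injectivity of \<open>k\<close>.\<close>

context
  fixes D :: "('a, 'b) rl_scheme"
  assumes RL: "residuated_lattice D"
begin

lemma ldiv_closed: "x \<in> carrier D \<Longrightarrow> y \<in> carrier D \<Longrightarrow> ldiv D x y \<in> carrier D"
  using RL unfolding residuated_lattice_def by blast

lemma rdiv_closed: "x \<in> carrier D \<Longrightarrow> y \<in> carrier D \<Longrightarrow> rdiv D x y \<in> carrier D"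
  using RL unfolding residuated_lattice_def by blast

lemma rle_refl: "x \<in> carrier D \<Longrightarrow> rle D x x"
  using RL unfolding residuated_lattice_def rle_def by metis

lemma rle_trans:
  assumes "x \<in> carrier D" "y \<in> carrier D" "z \<in> carrier D" "rle D x y" "rle D y z"
  shows "rle D x z"
proof -
  have "meet D x z = meet D (meet D x y) z" using assms(4) by (simp add: rle_def)
  also have "\<dots> = meet D x (meet D y z)" using RL assms(1-3) unfolding residuated_lattice_def by metis
  also have "\<dots> = x" using assms(4,5) by (simp add: rle_def)
  finally show ?thesis by (simp add: rle_def)
qed

lemma rle_antisym:
  "x \<in> carrier D \<Longrightarrow> y \<in> carrier D \<Longrightarrow> rle D x y \<Longrightarrow> rle D y x \<Longrightarrow> x = y"
  using RL unfolding rle_def residuated_lattice_def by metis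

lemma rle_mult_iff_ldiv:
  "x \<in> carrier D \<Longrightarrow> y \<in> carrier D \<Longrightarrow> z \<in> carrier D \<Longrightarrow>
    rle D (mult D x y) z \<longleftrightarrow> rle D y (ldiv D x z)"
  using RL unfolding residuated_lattice_def by blast

lemma rle_mult_iff_rdiv:
  "x \<in> carrier D \<Longrightarrow> y \<in> carrier D \<Longrightarrow> z \<in> carrier D \<Longrightarrow>
    rle D (mult D x y) z \<longleftrightarrow> rle D x (rdiv D z y)"
  using RL unfolding residuated_lattice_def by blast

lemma mult_rle_if_rle_and_square_rle:
  assumes carrier: "x \<in> carrier D" "y \<in> carrier D" "z \<in> carrier D"
    and "rle D x y" "rle D (mult D y y) z"
  shows "rle D (mult D x y) z"
proof -
  have "rle D y (rdiv D z y)" using assms by (simp add: rle_mult_iff_rdiv)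
  with \<open>rle D x y\<close> have "rle D x (rdiv D z y)"
    by (intro rle_trans[OF carrier(1,2) rdiv_closed[OF carrier(3,2)]])
  then show ?thesis using carrier by (simp add: rle_mult_iff_rdiv)
qed

end

lemma totally_ordered_rl_eq_if_squares_and_residuals_rle:
  assumes chain: "totally_ordered_rl D"
    and carrier: "x \<in> carrier D" "y \<in> carrier D" "y' \<in> carrier D" "U \<in> carrier D"
    and x_sq: "rle D (mult D x x) U" and x_res: "rle D (ldiv D x U) x"
    and y_sq: "rle D (mult D y y) U" and "rle D y' y" and y'_res: "rle D (ldiv D y' U) y"
  shows "x = y"
proof -
  have RL: "residuated_lattice D" using chain by (simp add: totally_ordered_rl_def)
  consider "rle D x y" | "rle D y x" using chain carrier unfolding totally_ordered_rl_def by blast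
  then show ?thesis
  proof cases
    case 1
    then have "rle D (mult D x y) U"
      using y_sq by (intro mult_rle_if_rle_and_square_rle[OF RL carrier(1,2,4)])
    then have "rle D y (ldiv D x U)" by (simp add: rle_mult_iff_ldiv[OF RL carrier(1,2,4)])
    then have "rle D y x"
      using x_res by (intro rle_trans[OF RL carrier(2) ldiv_closed[OF RL carrier(1,4)] carrier(1)])
    then show ?thesis using 1 by (intro rle_antisym[OF RL carrier(1,2)])
  next
    case 2
    with \<open>rle D y' y\<close> have "rle D y' x" by (intro rle_trans[OF RL carrier(3,2,1)])
    then have "rle D (mult D y' x) U"
      using x_sq by (intro mult_rle_if_rle_and_square_rle[OF RL carrier(3,1,4)])
    then have "rle D x (ldiv D y' U)" by (simp add: rle_mult_iff_ldiv[OF RL carrier(3,1,4)])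
    then have "rle D x y"
      using y'_res by (intro rle_trans[OF RL carrier(1) ldiv_closed[OF RL carrier(3,4)] carrier(2)])
    then show ?thesis using 2 by (intro rle_antisym[OF RL carrier(1,2)])
  qed
qed

lemma rl_hom_carrier: "rl_hom L M f \<Longrightarrow> x \<in> carrier L \<Longrightarrow> f x \<in> carrier M"
  by (simp add: rl_hom_def)

lemma rl_hom_meet:
  "rl_hom L M f \<Longrightarrow> x \<in> carrier L \<Longrightarrow> y \<in> carrier L \<Longrightarrow> f (meet L x y) = meet M (f x) (f y)"
  by (simp add: rl_hom_def)

lemma rl_hom_mult:
  "rl_hom L M f \<Longrightarrow> x \<in> carrier L \<Longrightarrow> y \<in> carrier L \<Longrightarrow> f (mult L x y) = mult M (f x) (f y)"
  by (simp add: rl_hom_def)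

lemma rl_hom_ldiv:
  "rl_hom L M f \<Longrightarrow> x \<in> carrier L \<Longrightarrow> y \<in> carrier L \<Longrightarrow> f (ldiv L x y) = ldiv M (f x) (f y)"
  by (simp add: rl_hom_def)

lemma rl_hom_comp: "rl_hom L M f \<Longrightarrow> rl_hom M N g \<Longrightarrow> rl_hom L N (g \<circ> f)"
  by (simp add: rl_hom_def)

lemma rl_emb_comp:
  assumes "rl_emb L M f" "rl_emb M N g"
  shows "rl_emb L N (g \<circ> f)"
proof -
  have "f ` carrier L \<subseteq> carrier M" using assms(1) by (auto simp: rl_emb_def rl_hom_def)
  then have "inj_on g (f ` carrier L)" using assms(2) by (auto simp: rl_emb_def intro: inj_on_subset)
  then show ?thesis using assms by (auto simp: rl_emb_def intro: comp_inj_on rl_hom_comp)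
qed

lemma rl_iso_imp_emb: "rl_iso L M f \<Longrightarrow> rl_emb L M f"
  by (simp add: rl_iso_def rl_emb_def bij_betw_def)

definition rl_closed_ops :: "('a, 'b) rl_scheme \<Rightarrow> bool" where
  "rl_closed_ops L \<longleftrightarrow> one L \<in> carrier L \<and>
     (\<forall>x\<in>carrier L. \<forall>y\<in>carrier L.
        meet L x y \<in> carrier L \<and> join L x y \<in> carrier L \<and> mult L x y \<in> carrier L \<and>
        ldiv L x y \<in> carrier L \<and> rdiv L x y \<in> carrier L)"

lemma inv_into_preserves_op:
  assumes bij: "bij_betw f A B"
    and op: "\<And>a b. a \<in> A \<Longrightarrow> b \<in> A \<Longrightarrow> opA a b \<in> A \<and> f (opA a b) = opB (f a) (f b)"
    and "x \<in> B" "y \<in> B"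
  shows "inv_into A f (opB x y) = opA (inv_into A f x) (inv_into A f y)"
proof -
  obtain a b where ab: "a \<in> A" "b \<in> A" "x = f a" "y = f b"
    using bij \<open>x \<in> B\<close> \<open>y \<in> B\<close> by (auto simp: bij_betw_def)
  have "inj_on f A" using bij by (simp add: bij_betw_def)
  then show ?thesis using ab op[OF ab(1,2)] by (metis inv_into_f_f)
qed

lemma rl_iso_inv_into_emb:
  assumes iso: "rl_iso L M f" and closed: "rl_closed_ops L"
  shows "rl_emb M L (inv_into (carrier L) f)"
proof -
  define g where "g = inv_into (carrier L) f"
  have hom: "rl_hom L M f" and bij: "bij_betw f (carrier L) (carrier M)"
    using iso by (auto simp: rl_iso_def)
  have "f (one L) = one M" "one L \<in> carrier L"
    using hom closed by (simp_all add: rl_hom_def rl_closed_ops_def)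
  then have "g (one M) = one L"
    using bij unfolding g_def by (metis bij_betw_def inv_into_f_f)
  moreover have "g x \<in> carrier L" if "x \<in> carrier M" for x
    using bij that unfolding g_def by (simp add: bij_betw_def inv_into_into)
  moreover have "inj_on g (carrier M)"
    using bij unfolding g_def by (simp add: bij_betw_def inj_on_inv_into)
  moreover have "g (meet M x y) = meet L (g x) (g y) \<and> g (join M x y) = join L (g x) (g y) \<and>
      g (mult M x y) = mult L (g x) (g y) \<and> g (ldiv M x y) = ldiv L (g x) (g y) \<and>
      g (rdiv M x y) = rdiv L (g x) (g y)"
    if "x \<in> carrier M" "y \<in> carrier M" for x y
    using that hom closed unfolding g_def
    by (intro conjI inv_into_preserves_op[OF bij]) (auto simp: rl_hom_def rl_closed_ops_def)
  ultimately show ?thesis unfolding g_def by (simp add: rl_emb_def rl_hom_def)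
qed

lemma has_1AP_isomorphic_copies:
  assumes "has_1AP K"
    and "LP \<in> K" "rl_iso P LP fP" "rl_closed_ops P"
    and "LQ \<in> K" "rl_iso Q LQ fQ"
    and "LR \<in> K" "rl_iso R LR fR"
    and i: "rl_emb P Q i" and j: "rl_emb P R j"
  obtains D h k where "D \<in> K" "rl_hom Q D h" "rl_emb R D k" "\<forall>x\<in>carrier P. h (i x) = k (j x)"
proof -
  define g where "g = inv_into (carrier P) fP"
  have g: "rl_emb LP P g" unfolding g_def using assms(3,4) by (rule rl_iso_inv_into_emb)
  have "rl_emb LP LQ (fQ \<circ> i \<circ> g)"
    using rl_emb_comp[OF rl_emb_comp[OF g i] rl_iso_imp_emb[OF assms(6)]] by (simp add: comp_assoc)
  moreover have "rl_emb LP LR (fR \<circ> j \<circ> g)"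
    using rl_emb_comp[OF rl_emb_comp[OF g j] rl_iso_imp_emb[OF assms(8)]] by (simp add: comp_assoc)
  ultimately obtain D h k where am: "one_amalgam K LP LQ LR (fQ \<circ> i \<circ> g) (fR \<circ> j \<circ> g) D h k"
    using assms(1,2,5,7) unfolding has_1AP_def by blast
  have "D \<in> K" using am by (simp add: one_amalgam_def)
  moreover have "rl_hom Q D (h \<circ> fQ)"
    using am assms(6) rl_hom_comp by (metis rl_iso_def one_amalgam_def)
  moreover have "rl_emb R D (k \<circ> fR)"
    using am by (intro rl_emb_comp[OF rl_iso_imp_emb[OF assms(8)]]) (simp add: one_amalgam_def)
  moreover have "(h \<circ> fQ) (i x) = (k \<circ> fR) (j x)" if "x \<in> carrier P" for x
  proof -
    have "fP x \<in> carrier LP" "g (fP x) = x"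
      using assms(3) that by (auto simp: g_def rl_iso_def rl_hom_def bij_betw_def inv_into_f_f)
    then show ?thesis using am by (force simp: one_amalgam_def)
  qed
  ultimately show thesis by (intro that) auto
qed

lemma no_amalgam_of_B_and_C_in_chain:
  assumes chain: "totally_ordered_rl D"
    and h: "rl_hom alg_B D h" and k: "rl_emb alg_C D k"
    and u: "h 0 = k 0" and v: "h 2 = k 3"
  shows False
proof -
  have k_hom: "rl_hom alg_C D k" and k_inj: "inj_on k {0,1,2,3,4}"
    using k by (auto simp: rl_emb_def alg_C_def)
  have RL: "residuated_lattice D" using chain by (simp add: totally_ordered_rl_def)
  have "h 1 \<in> carrier D" using rl_hom_carrier[OF h] by (simp add: alg_B_def)
  moreover have "k a \<in> carrier D" if "a \<in> {0,1,2}" for a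
    using that rl_hom_carrier[OF k_hom] by (auto simp: alg_C_def)
  moreover have "mult D (h 1) (h 1) = k 0"
    using rl_hom_mult[OF h, of 1 1] u by (simp add: alg_B_def B_mult_def)
  moreover have "ldiv D (h 1) (k 0) = h 1"
    using rl_hom_ldiv[OF h, of 1 0] u by (simp add: alg_B_def B_imp_def)
  moreover have "mult D (k 2) (k 2) = k 0"
    using rl_hom_mult[OF k_hom, of 2 2] by (simp add: alg_C_def C_mult_def)
  moreover have "rle D (k 1) (k 2)"
    using rl_hom_meet[OF k_hom, of 1 2] by (simp add: alg_C_def rle_def)
  moreover have "ldiv D (k 1) (k 0) = k 2"
    using rl_hom_ldiv[OF k_hom, of 1 0] by (simp add: alg_C_def C_imp_def)
  ultimately have "h 1 = k 2"
    by (intro totally_ordered_rl_eq_if_squares_and_residuals_rle[OF chain, where y' = "k 1" and U = "k 0"])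
      (simp_all add: rle_refl[OF RL])
  moreover have "mult D (k 3) (h 1) = h 1"
    using rl_hom_mult[OF h, of 2 1] v by (simp add: alg_B_def B_mult_def)
  moreover have "mult D (k 3) (k 2) = k 1"
    using rl_hom_mult[OF k_hom, of 3 2] by (simp add: alg_C_def C_mult_def)
  ultimately have "k 1 = k 2" by simp
  then show False using k_inj by (simp add: inj_on_def)
qed

definition embed_A_B :: "nat \<Rightarrow> nat" where "embed_A_B a = (if a = 0 then 0 else a + 1)"

definition embed_A_C :: "nat \<Rightarrow> nat" where "embed_A_C a = (if a = 0 then 0 else a + 2)"

lemma rl_emb_embed_A_B: "rl_emb alg_A alg_B embed_A_B"
  unfolding rl_emb_def rl_hom_def alg_A_def alg_B_def embed_A_B_def inj_on_def
  by (simp add: B_mult_def B_imp_def)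

lemma rl_emb_embed_A_C: "rl_emb alg_A alg_C embed_A_C"
  unfolding rl_emb_def rl_hom_def alg_A_def alg_C_def embed_A_C_def inj_on_def
  by (simp add: C_mult_def C_imp_def)

lemma rl_closed_ops_alg_A: "rl_closed_ops alg_A"
  by (simp add: rl_closed_ops_def alg_A_def)

theorem mainTheorem3:
  fixes K :: "'a rl set"
  assumes "\<forall>L\<in>K. totally_ordered_rl L"
    and "\<exists>L\<in>K. \<exists>f. rl_iso alg_A L f"
    and "\<exists>L\<in>K. \<exists>f. rl_iso alg_B L f"
    and "\<exists>L\<in>K. \<exists>f. rl_iso alg_C L f"
  shows "\<not> has_1AP K"
proof
  assume "has_1AP K"
  obtain LA fA where "LA \<in> K" "rl_iso alg_A LA fA" using assms(2) by blast
  obtain LB fB where "LB \<in> K" "rl_iso alg_B LB fB" using assms(3) by blast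
  obtain LC fC where "LC \<in> K" "rl_iso alg_C LC fC" using assms(4) by blast
  obtain D h k where D: "D \<in> K" and h: "rl_hom alg_B D h" and k: "rl_emb alg_C D k"
    and agree: "\<forall>x\<in>carrier alg_A. h (embed_A_B x) = k (embed_A_C x)"
    by (rule has_1AP_isomorphic_copies[OF \<open>has_1AP K\<close> \<open>LA \<in> K\<close> \<open>rl_iso alg_A LA fA\<close>
          rl_closed_ops_alg_A \<open>LB \<in> K\<close> \<open>rl_iso alg_B LB fB\<close> \<open>LC \<in> K\<close> \<open>rl_iso alg_C LC fC\<close>
          rl_emb_embed_A_B rl_emb_embed_A_C])
  have "h 0 = k 0" using agree by (simp add: alg_A_def embed_A_B_def embed_A_C_def)
  moreover have "h 2 = k 3"
    using bspec[OF agree, of 1]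
    by (simp add: alg_A_def embed_A_B_def embed_A_C_def numeral_2_eq_2 numeral_3_eq_3)
  moreover have "totally_ordered_rl D" using assms(1) D by blast
  ultimately show False using no_amalgam_of_B_and_C_in_chain h k by blast
qed

end
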